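(* Let $n\ge1$, let $a_1,\dots,a_n\in\mathbb{C}$ be distinct, let $m_1,\dots,m_n\ge1$ be integers, let $c_0,b_k^{(j)}\in\mathbb{C}$, and let $$r(\lambda)=\lambda-c_0-\sum_{j=1}^n\sum_{k=1}^{m_j}\frac{b_k^{(j)}}{(\lambda-a_j)^k}.$$ If $\lambda_0$ is a zero of $r$, then $$|\lambda_0|\le\max_{1\le j\le n}\Big\{|a_j|+\cos\Big(\frac{\pi}{m_j+1}\Big),\ |c_0|\Big\}+\frac12\left(\sqrt{\sum_{j=1}^n m_j}+\sqrt{\sum_{j=1}^n\sum_{k=1}^{m_j}|b_k^{(j)}|^2}\right).$$
   Context: A zero of $r$ is a $\lambda_0\in\mathbb{C}\setminus\{a_1,\dots,a_n\}$ with $r(\lambda_0)=0$. *)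

theory Defs
  imports "HOL-Analysis.Analysis"
begin

text \<open>The rational function r, with poles a j (j < n) of orders m j and
  coefficients b j k (1 \<le> k \<le> m j); indices are 0-based in j.\<close>
definition rfun :: "nat \<Rightarrow> complex \<Rightarrow> (nat \<Rightarrow> complex) \<Rightarrow> (nat \<Rightarrow> nat) \<Rightarrow>
    (nat \<Rightarrow> nat \<Rightarrow> complex) \<Rightarrow> complex \<Rightarrow> complex" where
  "rfun n c0 a m b z = z - c0 - (\<Sum>j<n. \<Sum>k=1..m j. b j k / (z - a j) ^ k)"

end

theory Submission imports Defs begin

text \<open>Write t_j = 1 / |z - a_j| for the zero z, S = sum_j sum_k t_j^(2k), B = sum |b_k^(j)|^2,
  N = sum_j m_j and M for the maximum in the bound. The equation z = c_0 + sum b_k^(j) / (z - a_j)^k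
  and Cauchy-Schwarz give |z| <= |c_0| + sqrt B sqrt S. For each pole, |z| <= |a_j| + |z - a_j|,
  and |z - a_j| sum_k t_j^(2k) = sum_k t_j^(k-1) t_j^k is a sum of adjacent products of
  (1, t_j, ..., t_j^m); apart from the first one, t_j, these are at most cos (pi / (m + 1))
  sum_k t_j^(2k), the top eigenvalue of the halved adjacency matrix of a path on m vertices.
  Summing over j and bounding sum_j t_j <= sqrt N sqrt S by Cauchy-Schwarz gives
  |z| (1 + S) <= M (1 + S) + (sqrt N + sqrt B) sqrt S, and sqrt S <= (1 + S) / 2 finishes the proof.\<close>

text \<open>The positive vector s certifies the bound through the weighted AM-GM inequality
  2 x y <= (s_(k+1) / s_k) x^2 + (s_k / s_(k+1)) y^2; the eigenvalue equation makes the weights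
  of each w_k^2 add up to 2 c.\<close>

lemma sum_adjacent_products_le_if_eigenvector:
  fixes s w :: "nat \<Rightarrow> real"
  assumes pos: "\<And>k. 1 \<le> k \<Longrightarrow> k \<le> m \<Longrightarrow> s k > 0"
    and "s 0 = 0" and "s (Suc m) = 0"
    and eigen: "\<And>k. 1 \<le> k \<Longrightarrow> k \<le> m \<Longrightarrow> s (k - 1) + s (Suc k) = 2 * c * s k"
  shows "(\<Sum>k=1..<m. w k * w (Suc k)) \<le> c * (\<Sum>k=1..m. (w k)\<^sup>2)"
proof -
  define r where "r k = s (Suc k) / s k" for k
  define q where "q k = s (k - 1) / s k" for k
  have "2 * (w k * w (Suc k)) \<le> r k * (w k)\<^sup>2 + q (Suc k) * (w (Suc k))\<^sup>2"
    if "1 \<le> k" "k < m" for k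
  proof -
    have "s k > 0" "s (Suc k) > 0" using pos that by auto
    then have "0 \<le> (s (Suc k) * w k - s k * w (Suc k))\<^sup>2 / (s k * s (Suc k))"
      by simp
    also have "\<dots> = r k * (w k)\<^sup>2 + q (Suc k) * (w (Suc k))\<^sup>2 - 2 * (w k * w (Suc k))"
      using \<open>s k > 0\<close> \<open>s (Suc k) > 0\<close>
      by (simp add: r_def q_def power2_eq_square field_simps)
    finally show ?thesis by simp
  qed
  then have "2 * (\<Sum>k=1..<m. w k * w (Suc k))
      \<le> (\<Sum>k=1..<m. r k * (w k)\<^sup>2) + (\<Sum>k=1..<m. q (Suc k) * (w (Suc k))\<^sup>2)"
    unfolding sum_distrib_left sum.distrib[symmetric] by (auto intro!: sum_mono)
  also have "(\<Sum>k=1..<m. r k * (w k)\<^sup>2) = (\<Sum>k=1..m. r k * (w k)\<^sup>2)"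
    using \<open>s (Suc m) = 0\<close>
    by (cases m) (simp_all add: r_def atLeastLessThanSuc_atLeastAtMost[symmetric])
  also have "(\<Sum>k=1..<m. q (Suc k) * (w (Suc k))\<^sup>2) = (\<Sum>k=Suc 1..<Suc m. q k * (w k)\<^sup>2)"
    by (rule sum.shift_bounds_Suc_ivl[symmetric])
  also have "\<dots> = (\<Sum>k=1..m. q k * (w k)\<^sup>2)"
    using \<open>s 0 = 0\<close>
    by (cases m) (simp_all add: q_def atLeastLessThanSuc_atLeastAtMost sum.atLeast_Suc_atMost)
  also have "(\<Sum>k=1..m. r k * (w k)\<^sup>2) + (\<Sum>k=1..m. q k * (w k)\<^sup>2) = 2 * c * (\<Sum>k=1..m. (w k)\<^sup>2)"
    unfolding sum.distrib[symmetric] sum_distrib_left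
  proof (rule sum.cong)
    fix k assume "k \<in> {1..m}"
    then have "r k + q k = 2 * c"
      using eigen[of k] pos[of k] by (simp add: r_def q_def field_simps)
    then show "r k * (w k)\<^sup>2 + q k * (w k)\<^sup>2 = 2 * c * (w k)\<^sup>2"
      by (metis distrib_right)
  qed simp
  finally show ?thesis by simp
qed

lemma sum_adjacent_products_le_cos:
  fixes w :: "nat \<Rightarrow> real"
  shows "(\<Sum>k=1..<m. w k * w (Suc k)) \<le> cos (pi / (real m + 1)) * (\<Sum>k=1..m. (w k)\<^sup>2)"
proof (rule sum_adjacent_products_le_if_eigenvector)
  define \<theta> where "\<theta> = pi / (real m + 1)"
  show "sin (real k * \<theta>) > 0" if "1 \<le> k" "k \<le> m" for k
  proof (rule sin_gt_zero)
    show "0 < real k * \<theta>" using that by (simp add: \<theta>_def)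
    have "real k * \<theta> < (real m + 1) * \<theta>"
      using that by (intro mult_strict_right_mono) (simp_all add: \<theta>_def)
    also have "\<dots> = pi" by (simp add: \<theta>_def)
    finally show "real k * \<theta> < pi" .
  qed
  show "sin (real 0 * \<theta>) = 0" by simp
  show "sin (real (Suc m) * \<theta>) = 0" by (simp add: \<theta>_def add.commute)
  show "sin (real (k - 1) * \<theta>) + sin (real (Suc k) * \<theta>) = 2 * cos \<theta> * sin (real k * \<theta>)"
    if "1 \<le> k" for k
    using that by (simp add: of_nat_diff algebra_simps sin_add sin_diff)
qed

lemma norm_mult_pole_block_le:
  fixes z a :: complex
  assumes "z \<noteq> a"
  defines "t \<equiv> inverse (norm (z - a))"
  shows "norm z * (\<Sum>k=1..m. (t ^ k)\<^sup>2)
    \<le> (norm a + cos (pi / (real m + 1))) * (\<Sum>k=1..m. (t ^ k)\<^sup>2) + t"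
proof -
  define S where "S = (\<Sum>k=1..m. (t ^ k)\<^sup>2)"
  have "norm (z - a) * t = 1" using assms by (simp add: t_def)
  then have "norm (z - a) * S = (\<Sum>k=1..m. t ^ (k - 1) * t ^ k)"
    unfolding S_def sum_distrib_left
  proof (intro sum.cong refl)
    fix k assume "k \<in> {1..m}"
    then have "t ^ k = t * t ^ (k - 1)" by (simp add: power_eq_if)
    then have "norm (z - a) * (t ^ k)\<^sup>2 = (norm (z - a) * t) * (t ^ (k - 1) * t ^ k)"
      by (simp add: power2_eq_square mult_ac)
    with \<open>norm (z - a) * t = 1\<close> show "norm (z - a) * (t ^ k)\<^sup>2 = t ^ (k - 1) * t ^ k"
      by simp
  qed
  also have "\<dots> = (\<Sum>k<m. t ^ k * t ^ Suc k)"
    unfolding One_nat_def sum.atLeast1_atMost_eq by simp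
  also have "\<dots> \<le> t + (\<Sum>k=1..<m. t ^ k * t ^ Suc k)"
    by (cases m) (simp_all add: t_def atLeast0LessThan[symmetric] sum.atLeast_Suc_lessThan)
  also have "\<dots> \<le> t + cos (pi / (real m + 1)) * S"
    unfolding S_def using sum_adjacent_products_le_cos[where w = "power t" and m = m] by simp
  finally have "norm (z - a) * S \<le> t + cos (pi / (real m + 1)) * S" .
  moreover have "norm z * S \<le> (norm a + norm (z - a)) * S"
    using norm_triangle_sub[of z a] by (intro mult_right_mono) (simp_all add: S_def sum_nonneg)
  ultimately show ?thesis unfolding S_def[symmetric] by (simp add: algebra_simps)
qed

lemma norm_le_if_rfun_eq_0:
  assumes "rfun n c0 a m b z = 0"
  shows "norm z \<le> norm c0 + sqrt (\<Sum>j<n. \<Sum>k=1..m j. (norm (b j k))\<^sup>2)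
      * sqrt (\<Sum>j<n. \<Sum>k=1..m j. (inverse (norm (z - a j)) ^ k)\<^sup>2)"
proof -
  let ?P = "Sigma {..<n} (\<lambda>j. {1..m j})"
  define X where "X = (\<Sum>j<n. \<Sum>k=1..m j. b j k / (z - a j) ^ k)"
  have "z = c0 + X" using assms unfolding rfun_def X_def[symmetric] by (simp add: algebra_simps)
  then have "norm z \<le> norm c0 + norm X" by (simp add: norm_triangle_ineq)
  also have "norm X \<le> (\<Sum>j<n. \<Sum>k=1..m j. norm (b j k / (z - a j) ^ k))"
    unfolding X_def by (intro order_trans[OF norm_sum] sum_mono norm_sum)
  also have "\<dots> = (\<Sum>j<n. \<Sum>k=1..m j. norm (b j k) * inverse (norm (z - a j)) ^ k)"
    by (simp add: norm_mult norm_inverse norm_power divide_inverse power_inverse)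
  also have "(\<Sum>j<n. \<Sum>k=1..m j. norm (b j k) * inverse (norm (z - a j)) ^ k)
      = (\<Sum>(j, k)\<in>?P. \<bar>norm (b j k)\<bar> * \<bar>inverse (norm (z - a j)) ^ k\<bar>)"
    by (simp add: sum.Sigma)
  also have "\<dots> \<le> L2_set (\<lambda>(j, k). norm (b j k)) ?P * L2_set (\<lambda>(j, k). inverse (norm (z - a j)) ^ k) ?P"
    using L2_set_mult_ineq[of "\<lambda>(j, k). norm (b j k)" "\<lambda>(j, k). inverse (norm (z - a j)) ^ k" ?P]
    by (simp add: case_prod_unfold)
  finally show ?thesis by (simp add: L2_set_def sum.Sigma case_prod_unfold)
qed

lemma sum_le_sqrt_mult_sqrt_sum_powers:
  fixes t :: "'a \<Rightarrow> real"
  assumes "\<And>j. j \<in> A \<Longrightarrow> m j \<ge> 1"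
  shows "(\<Sum>j\<in>A. t j) \<le> sqrt (real (\<Sum>j\<in>A. m j)) * sqrt (\<Sum>j\<in>A. \<Sum>k=1..m j. (t j ^ k)\<^sup>2)"
proof -
  have "(\<Sum>j\<in>A. t j) \<le> (\<Sum>j\<in>A. \<bar>1\<bar> * \<bar>t j\<bar>)" by (simp add: sum_mono)
  also have "\<dots> \<le> sqrt (card A) * sqrt (\<Sum>j\<in>A. (t j)\<^sup>2)"
    using L2_set_mult_ineq[of "\<lambda>_. 1" t A] by (simp add: L2_set_constant L2_set_def)
  also have "\<dots> \<le> sqrt (real (\<Sum>j\<in>A. m j)) * sqrt (\<Sum>j\<in>A. \<Sum>k=1..m j. (t j ^ k)\<^sup>2)"
  proof (intro mult_mono real_sqrt_le_mono)
    have "card A \<le> (\<Sum>j\<in>A. m j)"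
      using sum_mono[of A "\<lambda>_. 1" m] assms by simp
    then show "real (card A) \<le> real (\<Sum>j\<in>A. m j)"
      by (simp only: of_nat_le_iff)
    show "(\<Sum>j\<in>A. (t j)\<^sup>2) \<le> (\<Sum>j\<in>A. \<Sum>k=1..m j. (t j ^ k)\<^sup>2)"
    proof (rule sum_mono)
      fix j assume "j \<in> A"
      then have "(t j ^ 1)\<^sup>2 \<le> (\<Sum>k=1..m j. (t j ^ k)\<^sup>2)"
        using assms by (intro member_le_sum) auto
      then show "(t j)\<^sup>2 \<le> (\<Sum>k=1..m j. (t j ^ k)\<^sup>2)" by simp
    qed
  qed (simp_all add: sum_nonneg)
  finally show ?thesis .
qed

lemma le_add_half_if_mult_one_plus_le:
  fixes x M C S :: real
  assumes "x * (1 + S) \<le> M * (1 + S) + C * sqrt S" and "C \<ge> 0" and "S \<ge> 0"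
  shows "x \<le> M + C / 2"
proof -
  have "sqrt S \<le> (1 + S) / 2" using arith_geo_mean_sqrt[of 1 S] \<open>S \<ge> 0\<close> by simp
  then have "C * sqrt S \<le> C * ((1 + S) / 2)" using \<open>C \<ge> 0\<close> by (rule mult_left_mono)
  then have "x * (1 + S) \<le> M * (1 + S) + C * ((1 + S) / 2)" using assms(1) by linarith
  also have "\<dots> = (M + C / 2) * (1 + S)" by (simp add: algebra_simps)
  finally have "x * (1 + S) \<le> (M + C / 2) * (1 + S)" .
  then show ?thesis using \<open>S \<ge> 0\<close> by (simp add: mult_le_cancel_right)
qed

theorem theorem3p10:
  fixes n :: nat and a :: "nat \<Rightarrow> complex" and m :: "nat \<Rightarrow> nat"
    and c0 :: complex and b :: "nat \<Rightarrow> nat \<Rightarrow> complex" and l0 :: complex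
  assumes "n \<ge> 1"
    and "inj_on a {..<n}"
    and "\<And>j. j < n \<Longrightarrow> m j \<ge> 1"
    and "l0 \<notin> a ` {..<n}"
    and "rfun n c0 a m b l0 = 0"
  shows "norm l0 \<le> Max ((\<lambda>j. max (norm (a j) + cos (pi / (real (m j) + 1))) (norm c0)) ` {..<n})
      + (sqrt (real (\<Sum>j<n. m j)) + sqrt (\<Sum>j<n. \<Sum>k=1..m j. (norm (b j k))\<^sup>2)) / 2"
proof -
  define t where "t j = inverse (norm (l0 - a j))" for j
  define S where "S j = (\<Sum>k=1..m j. (t j ^ k)\<^sup>2)" for j
  define M where "M = Max ((\<lambda>j. max (norm (a j) + cos (pi / (real (m j) + 1))) (norm c0)) ` {..<n})"
  have M_ge: "max (norm (a j) + cos (pi / (real (m j) + 1))) (norm c0) \<le> M" if "j < n" for j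
    unfolding M_def using that by (intro Max_ge) auto
  have "norm l0 * (\<Sum>j<n. S j) \<le> (\<Sum>j<n. M * S j + t j)"
    unfolding sum_distrib_left
  proof (rule sum_mono)
    fix j assume "j \<in> {..<n}"
    then have "norm l0 * S j \<le> (norm (a j) + cos (pi / (real (m j) + 1))) * S j + t j"
      using assms(4) unfolding S_def t_def by (intro norm_mult_pole_block_le) auto
    moreover have "(norm (a j) + cos (pi / (real (m j) + 1))) * S j \<le> M * S j"
      using M_ge \<open>j \<in> {..<n}\<close> by (intro mult_right_mono) (simp_all add: S_def sum_nonneg)
    ultimately show "norm l0 * S j \<le> M * S j + t j" by linarith
  qed
  also have "\<dots> \<le> M * (\<Sum>j<n. S j) + sqrt (real (\<Sum>j<n. m j)) * sqrt (\<Sum>j<n. S j)"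
    using sum_le_sqrt_mult_sqrt_sum_powers[of "{..<n}" m t] assms(3)
    by (simp add: sum.distrib sum_distrib_left S_def)
  finally have poles: "norm l0 * (\<Sum>j<n. S j)
      \<le> M * (\<Sum>j<n. S j) + sqrt (real (\<Sum>j<n. m j)) * sqrt (\<Sum>j<n. S j)" .
  have "norm l0 \<le> norm c0 + sqrt (\<Sum>j<n. \<Sum>k=1..m j. (norm (b j k))\<^sup>2) * sqrt (\<Sum>j<n. S j)"
    using norm_le_if_rfun_eq_0[OF assms(5)] by (simp add: S_def t_def)
  moreover have "norm c0 \<le> M" using M_ge[of 0] assms(1) by simp
  ultimately have "norm l0 * (1 + (\<Sum>j<n. S j)) \<le> M * (1 + (\<Sum>j<n. S j))
      + (sqrt (real (\<Sum>j<n. m j)) + sqrt (\<Sum>j<n. \<Sum>k=1..m j. (norm (b j k))\<^sup>2)) * sqrt (\<Sum>j<n. S j)"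
    using poles by (simp add: algebra_simps)
  then show ?thesis unfolding M_def
    by (rule le_add_half_if_mult_one_plus_le) (simp_all add: S_def sum_nonneg)
qed

end
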